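(* Let $R$ be an associative ring with identity and involution $*$, and let $a\in R^{\#}\cap R^{\dagger}$. Then $a\in R^{SEP}$ if and only if, for both $k=2$ and $k=3$, $(a(a^{\#})^*a^{\dagger})^k$ is a left $(a^{\dagger}a^2)^k$-idempotent, i.e. $\big((a(a^{\#})^*a^{\dagger})^k\big)^2=(a^{\dagger}a^2)^k(a(a^{\#})^*a^{\dagger})^k$.
   Context: An involution on $R$ is a map $x\mapsto x^*$ with $(x^* )^*=x$, $(x+y)^*=x^*+y^*$, $(xy)^*=y^*x^*$. An element $a$ is Moore–Penrose invertible if there is $b$ with $aba=a$, $bab=b$, $(ab)^*=ab$, $(ba)^*=ba$; such $b$ is unique, denoted $a^{\dagger}$, and $R^{\dagger}$ is the set of such $a$. An element $a$ is group invertible if there is $b$ with $aba=a$, $bab=b$, $ab=ba$; such $b$ is unique, denoted $a^{\#}$, and $R^{\#}$ is the set of such $a$. For $a\in R^{\#}\cap R^{\dagger}$, $a$ is SEP if $a^*=a^{\dagger}=a^{\#}$; $R^{SEP}$ denotes the set of SEP elements. For $e,c\in R$, $e$ is a left $c$-idempotent if $e^2=ce$. *)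

theory Defs
  imports Main
begin

definition involution :: "('a::ring_1 \<Rightarrow> 'a) \<Rightarrow> bool" where
  "involution s \<longleftrightarrow> (\<forall>x. s (s x) = x) \<and> (\<forall>x y. s (x + y) = s x + s y)
     \<and> (\<forall>x y. s (x * y) = s y * s x)"

definition is_mp_inverse :: "('a::ring_1 \<Rightarrow> 'a) \<Rightarrow> 'a \<Rightarrow> 'a \<Rightarrow> bool" where
  "is_mp_inverse s a b \<longleftrightarrow> a * b * a = a \<and> b * a * b = b
     \<and> s (a * b) = a * b \<and> s (b * a) = b * a"

definition mp_invertible :: "('a::ring_1 \<Rightarrow> 'a) \<Rightarrow> 'a \<Rightarrow> bool" where
  "mp_invertible s a \<longleftrightarrow> (\<exists>b. is_mp_inverse s a b)"

definition mp_inv :: "('a::ring_1 \<Rightarrow> 'a) \<Rightarrow> 'a \<Rightarrow> 'a" where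
  "mp_inv s a = (THE b. is_mp_inverse s a b)"

definition is_group_inverse :: "'a::ring_1 \<Rightarrow> 'a \<Rightarrow> bool" where
  "is_group_inverse a b \<longleftrightarrow> a * b * a = a \<and> b * a * b = b \<and> a * b = b * a"

definition group_invertible :: "'a::ring_1 \<Rightarrow> bool" where
  "group_invertible a \<longleftrightarrow> (\<exists>b. is_group_inverse a b)"

definition group_inv :: "'a::ring_1 \<Rightarrow> 'a" where
  "group_inv a = (THE b. is_group_inverse a b)"

definition SEP :: "('a::ring_1 \<Rightarrow> 'a) \<Rightarrow> 'a \<Rightarrow> bool" where
  "SEP s a \<longleftrightarrow> group_invertible a \<and> mp_invertible s a
     \<and> s a = mp_inv s a \<and> mp_inv s a = group_inv a"

definition left_idempotent :: "'a::ring_1 \<Rightarrow> 'a \<Rightarrow> bool" where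
  "left_idempotent c e \<longleftrightarrow> e ^ 2 = c * e"

end

theory Submission
  imports Defs
begin

text \<open>
  Write \<open>d\<close> for the Moore-Penrose inverse and \<open>x\<close> for the group inverse of \<open>a\<close>,
  and put \<open>e = a x\<^sup>* d\<close> and \<open>P = a d\<close>. Then \<open>e P = e\<close> and \<open>e\<close> has the right inverse
  \<open>f = a a\<^sup>* a\<^sup>* d\<^sup>* d\<close> relative to \<open>P\<close>, i.e. \<open>e f = P\<close>; hence \<open>e\<^sup>k\<close> has the right
  inverse \<open>f\<^sup>k\<close>, and cancelling it in \<open>(e\<^sup>k)\<^sup>2 = (d a\<^sup>2)\<^sup>k e\<^sup>k\<close> gives \<open>e\<^sup>k = d a\<^sup>k\<^sup>+\<^sup>2 d\<close>.
  For \<open>k = 2\<close>, the identity \<open>P e\<^sup>2 = e\<^sup>2\<close> then forces \<open>d = a d d\<close>, which makes \<open>a\<close> EP,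
  i.e. \<open>d = x\<close>. Now \<open>e\<^sup>k = x a\<^sup>k\<^sup>+\<^sup>2 x = a\<^sup>k\<close> for \<open>k = 2, 3\<close>, so \<open>e\<^sup>3 = a e\<^sup>2\<close>, and cancelling
  \<open>f\<^sup>2\<close> once more yields \<open>e = a P = a\<close>, from which \<open>a\<^sup>* = d\<close> follows.
\<close>

lemma involutionD:
  assumes "involution s"
  shows "s (s u) = u" "s (u * v) = s v * s u"
  using assms unfolding involution_def by auto

lemma is_mp_inverse_unique:
  assumes inv: "involution s" and b: "is_mp_inverse s a b" and c: "is_mp_inverse s a c"
  shows "b = c"
proof -
  note sm = involutionD(2)[OF inv]
  have b1: "a*b*a = a" "b*a*b = b" "s (a*b) = a*b" "s (b*a) = b*a"
    using b unfolding is_mp_inverse_def by auto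
  have c1: "a*c*a = a" "c*a*c = c" "s (a*c) = a*c" "s (c*a) = c*a"
    using c unfolding is_mp_inverse_def by auto
  have "b = b * s (a*b)" using b1 by (simp add: mult.assoc)
  also have "\<dots> = b * (s b * s (a*c*a))" using c1 sm by simp
  also have "\<dots> = b * s (a*b) * s (a*c)" using sm by (simp add: mult.assoc)
  also have "\<dots> = b*a*c" using b1 c1 by (simp add: mult.assoc)
  finally have bac: "b = b*a*c" .
  have "c = s (c*a) * c" using c1 by (simp add: mult.assoc)
  also have "\<dots> = s (a*b*a) * s c * c" using b1 sm by simp
  also have "\<dots> = s (b*a) * s (c*a) * c" using sm by (simp add: mult.assoc)
  also have "\<dots> = b*a*c" using b1 c1 by (simp add: mult.assoc)
  finally show ?thesis using bac by simp
qed

lemma mp_inv_eqI: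
  assumes "involution s" "is_mp_inverse s a b"
  shows "mp_inv s a = b"
  unfolding mp_inv_def using assms by (metis the_equality is_mp_inverse_unique)

lemma is_group_inverse_unique:
  assumes b: "is_group_inverse a b" and c: "is_group_inverse a c"
  shows "b = c"
proof -
  have b1: "a*b*a = a" "b*a*b = b" "a*b = b*a" using b unfolding is_group_inverse_def by auto
  have c1: "a*c*a = a" "c*a*c = c" "a*c = c*a" using c unfolding is_group_inverse_def by auto
  have aba: "a*(b*a) = a" using b1(1) by (simp add: mult.assoc)
  have abca: "a*b = c*a"
  proof -
    have "a*b = c*a*a*b" using c1(1,3) by simp
    also have "\<dots> = c*(a*(b*a))" using b1(3) by (simp add: mult.assoc)
    finally show ?thesis using aba by simp
  qed
  have baac: "b*a = a*c" using abca b1(3) c1(3) by metis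
  have "b = b*a*b" using b1(2) by simp
  also have "\<dots> = c*(a*b)" using baac c1(3) by (simp add: mult.assoc)
  also have "\<dots> = c*(a*c)" using abca c1(3) by simp
  also have "\<dots> = c" using c1(2) by (simp add: mult.assoc)
  finally show ?thesis .
qed

lemma group_inv_eqI: "is_group_inverse a b \<Longrightarrow> group_inv a = b"
  unfolding group_inv_def by (metis the_equality is_group_inverse_unique)

lemma is_group_inverseD:
  assumes "is_group_inverse a x"
  shows "a * x * a = a" "x * a * x = x" "a * x = x * a"
    and "x * a * a = a" "a * a * x = a" "x * x * a = x"
proof -
  show axa: "a * x * a = a" and xax: "x * a * x = x" and comm: "a * x = x * a"
    using assms unfolding is_group_inverse_def by auto
  show "x * a * a = a" using axa comm by simp
  have "a * a * x = a * (x * a)" using comm by (simp add: mult.assoc)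
  then show "a * a * x = a" using axa by (simp add: mult.assoc)
  have "x * x * a = x * (a * x)" using comm by (simp add: mult.assoc)
  then show "x * x * a = x" using xax by (simp add: mult.assoc)
qed

lemma is_mp_inverseD:
  assumes "is_mp_inverse s a d"
  shows "a * d * a = a" "d * a * d = d" "s (a * d) = a * d" "s (d * a) = d * a"
  using assms unfolding is_mp_inverse_def by auto

lemma SEP_iff_inverses:
  assumes "involution s" "is_mp_inverse s a d" "is_group_inverse a x"
  shows "SEP s a \<longleftrightarrow> s a = d \<and> d = x"
  unfolding SEP_def mp_inv_eqI[OF assms(1,2)] group_inv_eqI[OF assms(3)]
  using assms(2,3) unfolding mp_invertible_def group_invertible_def by blast

lemma power_Suc_mult_group_inverse_power:
  assumes "is_group_inverse a x"
  shows "a ^ Suc n * x ^ n = a"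
proof (induction n)
  case 0
  show ?case by simp
next
  case (Suc n)
  have "a ^ Suc (Suc n) * x ^ Suc n = a ^ n * (a * a * x) * x ^ n"
    by (simp only: power_Suc2[of a] power_Suc[of x] mult.assoc)
  also have "\<dots> = a ^ Suc n * x ^ n"
    using is_group_inverseD(5)[OF assms] by (simp only: power_Suc2 mult.assoc)
  finally show ?case using Suc.IH by simp
qed

lemma group_inverse_power_cancel_right:
  assumes "is_group_inverse a x" "u * a ^ Suc n = v * a ^ Suc n"
  shows "u * a = v * a"
  using assms(2) power_Suc_mult_group_inverse_power[OF assms(1), of n] by (metis mult.assoc)

lemma group_inverse_conj_power:
  assumes "is_group_inverse a x"
  shows "x * a ^ Suc (Suc (Suc n)) * x = a ^ Suc n"
proof -
  note axa = is_group_inverseD(1)[OF assms] and aax = is_group_inverseD(5)[OF assms]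
  have xa: "x * a ^ Suc n = a ^ Suc n * x"
    by (rule power_commuting_commutes[OF is_group_inverseD(3)[OF assms], symmetric])
  have "x * a ^ Suc (Suc (Suc n)) * x = (x * a ^ Suc n) * (a * a * x)"
    by (simp only: power_Suc2 mult.assoc)
  also have "\<dots> = a ^ n * (a * x * a)"
    unfolding xa aax by (simp only: power_Suc2 mult.assoc)
  finally show ?thesis by (simp only: axa power_Suc2)
qed

lemma power_Suc_mult_inner_inverse:
  fixes a d :: "'a::monoid_mult"
  assumes "a * d * a = a"
  shows "a ^ Suc n * d * a = a ^ Suc n"
proof -
  have "a ^ Suc n * d * a = a ^ n * (a * d * a)" by (simp only: power_Suc2 mult.assoc)
  then show ?thesis using assms by (simp only: power_Suc2)
qed

lemma inner_inverse_mult_square_power: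
  fixes a d :: "'a::monoid_mult"
  assumes "a * d * a = a"
  shows "(d * a ^ 2) ^ Suc n = d * a ^ Suc (Suc n)"
proof (induction n)
  case 0
  show ?case by (simp add: power2_eq_square)
next
  case (Suc n)
  have "(d * a ^ 2) ^ Suc (Suc n) = d * a ^ Suc n * (a * d * a) * a"
    using Suc.IH by (simp only: power_Suc2 power2_eq_square mult.assoc)
  also have "\<dots> = d * a ^ Suc n * a * a" using assms by simp
  finally show ?case by (simp only: power_Suc2 mult.assoc)
qed

lemma power_right_inverse:
  fixes e f P :: "'a::monoid_mult"
  assumes "e * P = e" "e * f = P"
  shows "e ^ Suc n * f ^ Suc n = P"
proof (induction n)
  case 0
  show ?case using assms by simp
next
  case (Suc n)
  have "e ^ Suc (Suc n) * f ^ Suc (Suc n) = e * (e ^ Suc n * f ^ Suc n) * f"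
    by (simp only: power_Suc[of e "Suc n"] power_Suc2[of f "Suc n"] mult.assoc)
  then show ?case using Suc.IH assms by simp
qed

lemma eq_mult_of_power_right_inverse:
  fixes e g P b :: "'a::monoid_mult"
  assumes "e * P = e" "e ^ n * g = P" "e ^ Suc n = b * e ^ n"
  shows "e = b * P"
proof -
  have "e = e * (e ^ n * g)" using assms(1,2) by simp
  also have "\<dots> = b * (e ^ n * g)" using assms(3) by (simp add: mult.assoc[symmetric])
  finally show ?thesis using assms(2) by simp
qed

lemma left_idempotent_eq_of_right_inverse:
  fixes c e g P :: "'a::ring_1"
  assumes "left_idempotent c e" "e * P = e" "e * g = P"
  shows "e = c * P"
  using assms eq_mult_of_power_right_inverse[of e P 1 g c]
  unfolding left_idempotent_def by (simp add: power2_eq_square)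

lemma mp_inverse_mult_star:
  assumes inv: "involution s" and mp: "is_mp_inverse s a d"
  shows "d * a * s a = s a"
proof -
  have "d * a * s a = s (d * a) * s a" using is_mp_inverseD(4)[OF mp] by simp
  also have "\<dots> = s (a * (d * a))" by (rule involutionD(2)[OF inv, symmetric])
  finally show ?thesis using is_mp_inverseD(1)[OF mp] by (simp add: mult.assoc)
qed

lemma mp_group_right_inverse:
  assumes inv: "involution s" and mp: "is_mp_inverse s a d" and gi: "is_group_inverse a x"
  shows "(a * s x * d) * (a * s a * s a * s d * d) = a * d"
proof -
  note sm = involutionD(2)[OF inv]
  have "s x * s a * s a = s (a * a * x)" by (simp only: sm mult.assoc)
  then have xsa: "s x * s a * s a = s a" by (simp only: is_group_inverseD(5)[OF gi])
  have "s a * s d = d * a" using is_mp_inverseD(4)[OF mp] by (simp only: sm)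
  then have sasdd: "s a * s d * d = d" using is_mp_inverseD(2)[OF mp] by simp
  have "(a * s x * d) * (a * s a * s a * s d * d) = a * s x * (d * a * s a) * s a * s d * d"
    by (simp only: mult.assoc)
  also have "\<dots> = a * (s x * s a * s a) * s d * d"
    unfolding mp_inverse_mult_star[OF inv mp] by (simp only: mult.assoc)
  also have "\<dots> = a * (s a * s d * d)"
    unfolding xsa by (simp only: mult.assoc)
  finally show ?thesis by (simp only: sasdd)
qed

lemma mp_inverse_eq_group_inverse:
  assumes inv: "involution s" and mp: "is_mp_inverse s a d" and gi: "is_group_inverse a x"
    and add: "a * d * d = d"
  shows "d = x"
proof -
  note ss = involutionD(1)[OF inv] and sm = involutionD(2)[OF inv]
  note dasa = mp_inverse_mult_star[OF inv mp]
  have "a * d * s a = a * d * (d * a * s a)" using dasa by simp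
  also have "\<dots> = (a * d * d) * a * s a" by (simp add: mult.assoc)
  also have "\<dots> = s a" using add dasa by simp
  finally have adsa: "a * d * s a = s a" .
  have "a = s (a * d * s a)" using adsa ss by simp
  also have "\<dots> = s (s a) * s (a * d)" by (rule sm)
  also have "\<dots> = a * (a * d)" using ss is_mp_inverseD(3)[OF mp] by simp
  finally have aad: "a * (a * d) = a" by simp
  have "a * d = x * a * a * d" using is_group_inverseD(4)[OF gi] by simp
  also have "\<dots> = x * (a * (a * d))" by (simp add: mult.assoc)
  finally have ad_xa: "a * d = x * a" using aad by simp
  have "d = x * a * d" using add ad_xa by simp
  also have "\<dots> = x * (x * a)" using ad_xa by (simp add: mult.assoc)
  finally show ?thesis using is_group_inverseD(6)[OF gi] by (simp add: mult.assoc)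
qed

lemma star_eq_mp_inverse:
  assumes inv: "involution s" and mp: "is_mp_inverse s a d"
    and comm: "a * d = d * a" and asdd: "a * s d * d = a"
  shows "s a = d"
proof -
  note ss = involutionD(1)[OF inv] and sm = involutionD(2)[OF inv]
  note ada = is_mp_inverseD(1)[OF mp] and dad = is_mp_inverseD(2)[OF mp]
  have "a * d * s d = s (a * d) * s d" using is_mp_inverseD(3)[OF mp] by simp
  also have "\<dots> = s (d * (a * d))" by (rule sm[symmetric])
  finally have sd_left: "a * d * s d = s d" using dad by (simp add: mult.assoc)
  have "s d * (d * a) = s d * s (d * a)" using is_mp_inverseD(4)[OF mp] by simp
  also have "\<dots> = s (d * a * d)" by (rule sm[symmetric])
  finally have sd_right: "s d * (d * a) = s d" using dad by simp
  have "d * a = d * (a * s d * d)" using asdd by simp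
  also have "\<dots> = a * d * s d * d" using comm by (simp add: mult.assoc[symmetric])
  finally have sdd: "s d * d = d * a" using sd_left by simp
  have "s d = s d * d * a" using sd_right by (simp add: mult.assoc)
  also have "\<dots> = a" using sdd comm ada by simp
  finally have "s d = a" .
  then show ?thesis using ss[of d] by simp
qed

lemma left_idempotent_powers_of_SEP:
  assumes inv: "involution s" and gi: "is_group_inverse a x" and "s a = x"
  shows "left_idempotent ((x * a ^ 2) ^ k) ((a * s x * x) ^ k)"
proof -
  have "s x = a" using assms(3) involutionD(1)[OF inv] by metis
  then have "x * a ^ 2 = a" and "a * s x * x = a"
    using is_group_inverseD(4,5)[OF gi] by (simp_all add: power2_eq_square mult.assoc)
  then show ?thesis unfolding left_idempotent_def by (simp add: power2_eq_square)
qed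

lemma SEP_of_left_idempotent_powers:
  assumes inv: "involution s" and mp: "is_mp_inverse s a d" and gi: "is_group_inverse a x"
    and li2: "left_idempotent ((d * a ^ 2) ^ 2) ((a * s x * d) ^ 2)"
    and li3: "left_idempotent ((d * a ^ 2) ^ 3) ((a * s x * d) ^ 3)"
  shows "s a = d \<and> d = x"
proof -
  define e where "e = a * s x * d"
  define P where "P = a * d"
  note ada = is_mp_inverseD(1)[OF mp] and dad = is_mp_inverseD(2)[OF mp]
  obtain f where ef: "e * f = P"
    using mp_group_right_inverse[OF inv mp gi] unfolding e_def P_def by blast
  have eP: "e * P = e" unfolding e_def P_def using dad by (simp add: mult.assoc)
  have Pe: "P * e = e" unfolding e_def P_def using ada by (simp add: mult.assoc[symmetric])
  have power_eq: "e ^ Suc k = d * a ^ Suc (Suc (Suc k)) * d"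
    if "left_idempotent ((d * a ^ 2) ^ Suc k) (e ^ Suc k)" for k
  proof -
    have "e ^ Suc k * P = e ^ Suc k" using eP by (metis mult.assoc power_Suc2)
    then have "e ^ Suc k = (d * a ^ 2) ^ Suc k * P"
      using left_idempotent_eq_of_right_inverse that power_right_inverse[OF eP ef] by blast
    then show ?thesis
      unfolding inner_inverse_mult_square_power[OF ada] P_def by (simp only: power_Suc2 mult.assoc)
  qed
  have e2: "e ^ 2 = d * a ^ 4 * d"
    using power_eq[of 1] li2 unfolding e_def by (simp add: numeral_eq_Suc)
  have e3: "e ^ 3 = d * a ^ 5 * d"
    using power_eq[of 2] li3 unfolding e_def by (simp add: numeral_eq_Suc)
  have a4: "a ^ 4 * d * a = a ^ 4"
    using power_Suc_mult_inner_inverse[OF ada, of 3] by simp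
  have "P * e ^ 2 = e ^ 2" using Pe by (simp add: power2_eq_square mult.assoc[symmetric])
  then have "a * d * d * a ^ 4 * d = d * a ^ 4 * d"
    unfolding e2 P_def by (simp only: mult.assoc)
  then have "a * d * d * a ^ 4 * d * a = d * a ^ 4 * d * a" by simp
  then have "(a * d * d) * (a ^ 4 * d * a) = d * (a ^ 4 * d * a)"
    by (simp only: mult.assoc)
  then have "(a * d * d) * a ^ 4 = d * a ^ 4" unfolding a4 .
  then have adda: "a * d * d * a = d * a"
    using group_inverse_power_cancel_right[OF gi, of "a * d * d" 3 d] by simp
  have "a * d * d = a * d * d * a * d" using dad by (simp add: mult.assoc)
  also have "\<dots> = d" using adda dad by simp
  finally have dx: "d = x" using mp_inverse_eq_group_inverse[OF inv mp gi] by blast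
  have "e ^ 2 = a ^ 2" "e ^ 3 = a ^ 3"
    using e2 e3 group_inverse_conj_power[OF gi, of 1] group_inverse_conj_power[OF gi, of 2]
    unfolding dx by (simp_all add: numeral_eq_Suc)
  then have "e ^ Suc 2 = a * e ^ 2" by (simp add: eval_nat_numeral)
  moreover have "e ^ 2 * f ^ 2 = P"
    using power_right_inverse[OF eP ef, of 1] by (simp add: power2_eq_square)
  ultimately have eaP: "e = a * P" using eq_mult_of_power_right_inverse[OF eP] by blast
  have comm: "a * d = d * a" using is_group_inverseD(3)[OF gi] dx by simp
  have "a * P = a * (d * a)" unfolding P_def using comm by simp
  then have "a * P = a" using ada by (simp add: mult.assoc)
  then have "a * s d * d = a" using eaP unfolding e_def dx by simp
  then show ?thesis using star_eq_mp_inverse[OF inv mp comm] dx by blast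
qed

theorem theorem4p3:
  fixes s :: "'a::ring_1 \<Rightarrow> 'a" and a :: 'a
  assumes "involution s"
    and "group_invertible a"
    and "mp_invertible s a"
  shows "SEP s a \<longleftrightarrow>
    (\<forall>k\<in>{2::nat, 3}.
       left_idempotent ((mp_inv s a * a ^ 2) ^ k) ((a * s (group_inv a) * mp_inv s a) ^ k))"
proof -
  obtain d where mp: "is_mp_inverse s a d" using assms(3) unfolding mp_invertible_def by blast
  obtain x where gi: "is_group_inverse a x" using assms(2) unfolding group_invertible_def by blast
  note SEP_iff = SEP_iff_inverses[OF assms(1) mp gi]
  show ?thesis
    unfolding mp_inv_eqI[OF assms(1) mp] group_inv_eqI[OF gi]
  proof
    assume "SEP s a"
    then have "s a = x" "d = x" using SEP_iff by auto
    then show "\<forall>k\<in>{2, 3}. left_idempotent ((d * a ^ 2) ^ k) ((a * s x * d) ^ k)"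
      using left_idempotent_powers_of_SEP[OF assms(1) gi] by simp
  next
    assume "\<forall>k\<in>{2, 3}. left_idempotent ((d * a ^ 2) ^ k) ((a * s x * d) ^ k)"
    then show "SEP s a"
      using SEP_iff SEP_of_left_idempotent_powers[OF assms(1) mp gi] by simp
  qed
qed

end
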